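(* Let $q_1=(1,1,1)$, $q_2=(-1,-1,1)$, $q_3=(-1,1,-1)$, $q_4=(1,-1,-1)$, let $t\in(0,1)$ and $q_{j+4}=tq_j$ ($j=1,\dots,4$). Place nonzero mass $\mu_1$ at each vertex $q_1,\dots,q_4$ of the outer tetrahedron and nonzero mass $\mu_2$ at each vertex $q_5,\dots,q_8$ of the inner tetrahedron. There exists $\delta\in(0,1)$ such that: if $t\in(0,\delta)$ and the configuration is central, then $\mu_1$ and $\mu_2$ have the same sign; if $t\in(\delta,1)$ and the configuration is central, then $\mu_1$ and $\mu_2$ have opposite signs.
   Context: A configuration $q=(q_1,\dots,q_N)$ of distinct points in $\mathbb{R}^3$ with masses $m_1,\dots,m_N$ is a central configuration if there exists $c\in\mathbb{R}$ such that $\sum_{j\neq i} m_j\left(\frac{1}{|q_j-q_i|^3}-c\right)(q_j-q_i)=0$ for all $i=1,\dots,N$. *)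

theory Defs
  imports "HOL-Analysis.Analysis"
begin

definition central_config :: "nat \<Rightarrow> (nat \<Rightarrow> real^3) \<Rightarrow> (nat \<Rightarrow> real) \<Rightarrow> bool" where
  "central_config N q m \<longleftrightarrow> inj_on q {1..N} \<and>
     (\<exists>c::real. \<forall>i\<in>{1..N}.
        (\<Sum>j\<in>{1..N} - {i}. m j *\<^sub>R ((1 / norm (q j - q i) ^ 3 - c) *\<^sub>R (q j - q i))) = 0)"

definition tet_vertex :: "nat \<Rightarrow> real^3" where
  "tet_vertex j = (if j = 1 then vector [1, 1, 1]
                  else if j = 2 then vector [-1, -1, 1]
                  else if j = 3 then vector [-1, 1, -1]
                  else vector [1, -1, -1])"

definition nested_tet :: "real \<Rightarrow> nat \<Rightarrow> real^3" where
  "nested_tet t j = (if j \<le> 4 then tet_vertex j else t *\<^sub>R tet_vertex (j - 4))"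

definition nested_mass :: "real \<Rightarrow> real \<Rightarrow> nat \<Rightarrow> real" where
  "nested_mass \<mu>1 \<mu>2 j = (if j \<le> 4 then \<mu>1 else \<mu>2)"

end

(* Eliminating c between the x-components of the equations at q_1 and at q_5 = t q_1 leaves a
   single relation \<mu>1 * outer_coeff t + \<mu>2 * inner_coeff t = 0. The coefficient of \<mu>1 is
   negative on (0,1) by a polynomial inequality, so \<mu>1 and \<mu>2 have the same sign exactly when
   inner_coeff t > 0. Now t^2 * inner_coeff t = 4 / sqrt 8 ^ 3 - scaled_mixed_force t, and
   scaled_mixed_force is strictly increasing and crosses the level 4 / sqrt 8 ^ 3 between 1/2 and
   3/5; the crossing point is \<delta>. *)

theory Submission
  imports Defs
begin

lemma strict_mono_on_threshold:
  fixes f :: "real \<Rightarrow> real"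
  assumes mono: "strict_mono_on {a<..<b} f"
    and "a < p" "p < q" "q < b" "f p \<le> L" "L < f q"
  obtains \<delta> where "p \<le> \<delta>" "\<delta> \<le> q"
    "\<And>t. a < t \<Longrightarrow> t < \<delta> \<Longrightarrow> f t < L"
    "\<And>t. \<delta> < t \<Longrightarrow> t < b \<Longrightarrow> L < f t"
proof
  define S where "S = {t \<in> {a<..<b}. f t \<le> L}"
  have p: "p \<in> S"
    using assms by (simp add: S_def)
  have below_q: "s < q" if "s \<in> S" for s
  proof (rule ccontr)
    assume "\<not> s < q"
    then have "f q \<le> f s"
      using that assms(2-4) by (intro strict_mono_on_leD[OF mono]) (auto simp: S_def)
    with that assms(6) show False
      by (simp add: S_def)
  qed
  then have bdd: "bdd_above S"
    by (meson bdd_above.I less_imp_le)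
  show p_le: "p \<le> Sup S"
    using p bdd by (rule cSup_upper)
  show "Sup S \<le> q"
    using p below_q by (intro cSup_least) (auto intro: less_imp_le)
  show "f t < L" if t: "a < t" "t < Sup S" for t
  proof -
    obtain s where "s \<in> S" "t < s"
      using t(2) less_cSup_iff[OF _ bdd] p by blast
    then show ?thesis
      using t(1) strict_mono_onD[OF mono, of t s] by (auto simp: S_def)
  qed
  show "L < f t" if "Sup S < t" "t < b" for t
  proof (rule ccontr)
    assume "\<not> L < f t"
    then have "t \<in> S"
      using that p_le assms(2) by (auto simp: S_def)
    then show False
      using that(1) cSup_upper[OF _ bdd] by fastforce
  qed
qed

lemma mult_add_eq_0_sgn:
  fixes a b f g :: real
  assumes "a * f + b * g = 0" "f < 0"
  shows "0 < g \<Longrightarrow> sgn a = sgn b" and "g < 0 \<Longrightarrow> sgn a = - sgn b"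
proof -
  have "sgn a * sgn f = - (sgn b * sgn g)"
    using arg_cong[where f = sgn, OF assms(1)[unfolded add_eq_0_iff]] by (simp add: sgn_mult)
  then show "0 < g \<Longrightarrow> sgn a = sgn b" and "g < 0 \<Longrightarrow> sgn a = - sgn b"
    using assms(2) by simp_all
qed

lemma norm_diff_vector3:
  "norm (vector [a, b, c] - vector [a', b', c'] :: real^3) = sqrt ((a - a')^2 + (b - b')^2 + (c - c')^2)"
  by (simp add: norm_vec_def L2_set_def sum_3)

definition net_force :: "nat \<Rightarrow> (nat \<Rightarrow> real^3) \<Rightarrow> (nat \<Rightarrow> real) \<Rightarrow> real \<Rightarrow> nat \<Rightarrow> real^3" where
  "net_force N q m c i = (\<Sum>j\<in>{1..N} - {i}. m j *\<^sub>R ((1 / norm (q j - q i) ^ 3 - c) *\<^sub>R (q j - q i)))"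

lemma central_config_net_force:
  "central_config N q m \<longleftrightarrow> inj_on q {1..N} \<and> (\<exists>c. \<forall>i\<in>{1..N}. net_force N q m c i = 0)"
  by (simp add: central_config_def net_force_def)

lemma nested_tet_simps:
  "nested_tet t 1 = vector [1, 1, 1]" "nested_tet t 2 = vector [-1, -1, 1]"
  "nested_tet t 3 = vector [-1, 1, -1]" "nested_tet t 4 = vector [1, -1, -1]"
  "nested_tet t 5 = vector [t, t, t]" "nested_tet t 6 = vector [-t, -t, t]"
  "nested_tet t 7 = vector [-t, t, -t]" "nested_tet t 8 = vector [t, -t, -t]"
  "nested_tet t (Suc 0) = vector [1, 1, 1]"
  by (auto simp: nested_tet_def tet_vertex_def vec_eq_iff forall_3)

(* |q_j - t q_j| and |q_j - t q_k| for distinct outer vertices q_j, q_k *)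
definition radial_dist :: "real \<Rightarrow> real" where
  "radial_dist t = sqrt 3 * (1 - t)"

definition cross_dist :: "real \<Rightarrow> real" where
  "cross_dist t = sqrt (3 * t^2 + 2 * t + 3)"

lemma radial_dist_sqrt:
  assumes "t \<le> 1"
  shows "sqrt (3 * (t - 1)^2) = radial_dist t" "sqrt (3 * (1 - t)^2) = radial_dist t"
  using assms by (simp_all add: radial_dist_def real_sqrt_mult power2_commute[of t 1])

lemma cross_dist_sqrt:
  "sqrt (2 * (- t - 1)^2 + (t - 1)^2) = cross_dist t"
  "sqrt (2 * (- 1 - t)^2 + (1 - t)^2) = cross_dist t"
  unfolding cross_dist_def by (simp_all add: power2_eq_square algebra_simps)

lemma net_force_outer_vertex:
  assumes "t \<le> 1"
  shows "net_force 8 (nested_tet t) (nested_mass \<mu>1 \<mu>2) c 1 $ 1 =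
    \<mu>2 * ((1 / radial_dist t ^ 3 - c) * (t - 1) - (1 / cross_dist t ^ 3 - c) * (t + 3))
    - 4 * \<mu>1 * (1 / sqrt 8 ^ 3 - c)"
proof -
  have "{1..8::nat} - {1} = {2,3,4,5,6,7,8}" by auto
  then show ?thesis using assms
    by (simp add: net_force_def nested_tet_simps nested_mass_def norm_diff_vector3
        radial_dist_sqrt cross_dist_sqrt) (simp add: algebra_simps flip: add_divide_distrib)
qed

lemma net_force_inner_vertex:
  assumes "0 \<le> t" "t \<le> 1"
  shows "net_force 8 (nested_tet t) (nested_mass \<mu>1 \<mu>2) c 5 $ 1 =
    \<mu>1 * ((1 / radial_dist t ^ 3 - c) * (1 - t) - (1 / cross_dist t ^ 3 - c) * (1 + 3 * t))
    - 4 * t * \<mu>2 * (1 / (t * sqrt 8) ^ 3 - c)"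
proof -
  have "{1..8::nat} - {5} = {1,2,3,4,6,7,8}" by auto
  moreover have "sqrt (8 * t^2) = t * sqrt 8"
    using assms(1) by (simp add: real_sqrt_mult)
  ultimately show ?thesis using assms
    by (simp add: net_force_def nested_tet_simps nested_mass_def norm_diff_vector3
        radial_dist_sqrt cross_dist_sqrt) (simp add: algebra_simps flip: add_divide_distrib)
qed

definition outer_coeff :: "real \<Rightarrow> real" where
  "outer_coeff t = (1 + 3 * t) / cross_dist t ^ 3 - (1 - t) / radial_dist t ^ 3 - 4 * t / sqrt 8 ^ 3"

definition inner_coeff :: "real \<Rightarrow> real" where
  "inner_coeff t = t * (4 / (t * sqrt 8) ^ 3 - (1 - t) / radial_dist t ^ 3 - (t + 3) / cross_dist t ^ 3)"

lemma central_config_nested_tet_balance: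
  assumes "central_config 8 (nested_tet t) (nested_mass \<mu>1 \<mu>2)" "0 < t" "t < 1"
  shows "\<mu>1 * outer_coeff t + \<mu>2 * inner_coeff t = 0"
proof -
  obtain c where c: "\<forall>i\<in>{1..8}. net_force 8 (nested_tet t) (nested_mass \<mu>1 \<mu>2) c i = 0"
    using assms(1) by (auto simp: central_config_net_force)
  define A R C E where "A = 1 / sqrt 8 ^ 3" and "R = 1 / radial_dist t ^ 3"
    and "C = 1 / cross_dist t ^ 3" and "E = 1 / (t * sqrt 8) ^ 3"
  have "\<mu>2 * ((R - c) * (t - 1) - (C - c) * (t + 3)) - 4 * \<mu>1 * (A - c) = 0"
    using c net_force_outer_vertex[of t \<mu>1 \<mu>2 c] assms(3) by (simp add: A_def R_def C_def)
  moreover have "\<mu>1 * ((R - c) * (1 - t) - (C - c) * (1 + 3 * t)) - 4 * t * \<mu>2 * (E - c) = 0"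
    using c net_force_inner_vertex[of t \<mu>1 \<mu>2 c] assms(2,3) by (simp add: R_def C_def E_def)
  \<comment> \<open>t times the first equation minus the second: the terms in c cancel\<close>
  ultimately have "\<mu>1 * ((1 + 3 * t) * C - (1 - t) * R - 4 * t * A)
      + \<mu>2 * (t * (4 * E - (1 - t) * R - (t + 3) * C)) = 0"
    by algebra
  then show ?thesis
    by (simp add: outer_coeff_def inner_coeff_def A_def R_def C_def E_def)
qed

lemma radial_term_eq:
  assumes "t < 1"
  shows "(1 - t) / radial_dist t ^ 3 = 1 / (sqrt 3 ^ 3 * (1 - t)^2)"
proof -
  have "radial_dist t ^ 3 = sqrt 3 ^ 3 * (1 - t)^3"
    by (simp only: radial_dist_def power_mult_distrib)
  then show ?thesis
    using assms by (simp add: power2_eq_square power3_eq_cube)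
qed

lemma cross_term_le_radial_term:
  assumes "0 \<le> t" "t < 1"
  shows "(1 + 3 * t) / cross_dist t ^ 3 \<le> (1 - t) / radial_dist t ^ 3"
proof -
  let ?Q = "3 * t^2 + 2 * t + 3" and ?P = "(1 + 3 * t) * (1 - t)^2"
  have "?Q ^ 3 - 3 ^ 3 * ?P^2 = t^2 * (360 * (1 - t^2)^2 + 224 * t + 864 * t^3 - 576 * t^4)"
    by (simp add: power2_eq_square power3_eq_cube power4_eq_xxxx algebra_simps)
  moreover have "0 \<le> 360 * (1 - t^2)^2 + 224 * t + 864 * t^3 - 576 * t^4"
  proof -
    have "t^4 \<le> t^3" "0 \<le> t^3"
      using assms by (auto intro: power_decreasing)
    then show ?thesis
      using assms zero_le_power2[of "1 - t^2"] by linarith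
  qed
  ultimately have "3 ^ 3 * ?P^2 \<le> ?Q ^ 3"
    by (smt (verit) mult_nonneg_nonneg zero_le_power2)
  have "sqrt 3 ^ 3 * ?P = sqrt (3 ^ 3 * ?P^2)"
    using assms by (simp only: real_sqrt_mult real_sqrt_abs real_sqrt_power[of 3]) simp
  also have "\<dots> \<le> sqrt (?Q ^ 3)"
    using \<open>3 ^ 3 * ?P^2 \<le> ?Q ^ 3\<close> by (rule real_sqrt_le_mono)
  also have "\<dots> = cross_dist t ^ 3"
    by (simp add: cross_dist_def real_sqrt_power)
  finally have "(1 + 3 * t) * (sqrt 3 ^ 3 * (1 - t)^2) \<le> cross_dist t ^ 3"
    by (simp add: algebra_simps)
  moreover have "0 < cross_dist t"
    using assms by (simp add: cross_dist_def add_nonneg_pos)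
  ultimately show ?thesis
    using assms by (simp add: radial_term_eq divide_simps)
qed

lemma outer_coeff_neg:
  assumes "0 < t" "t < 1"
  shows "outer_coeff t < 0"
proof -
  have "0 < 4 * t / sqrt 8 ^ 3"
    using assms by simp
  then show ?thesis
    unfolding outer_coeff_def using cross_term_le_radial_term[of t] assms by linarith
qed

definition scaled_mixed_force :: "real \<Rightarrow> real" where
  "scaled_mixed_force t = t ^ 3 * ((1 - t) / radial_dist t ^ 3 + (t + 3) / cross_dist t ^ 3)"

lemma inner_coeff_scaled:
  assumes "0 < t"
  shows "t^2 * inner_coeff t = 4 / sqrt 8 ^ 3 - scaled_mixed_force t"
  using assms by (simp add: inner_coeff_def scaled_mixed_force_def power2_eq_square power3_eq_cube algebra_simps)

lemma inner_coeff_sign: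
  assumes "0 < t"
  shows "0 < inner_coeff t \<longleftrightarrow> scaled_mixed_force t < 4 / sqrt 8 ^ 3"
    and "inner_coeff t < 0 \<longleftrightarrow> 4 / sqrt 8 ^ 3 < scaled_mixed_force t"
proof -
  have "0 < inner_coeff t \<longleftrightarrow> 0 < t^2 * inner_coeff t" "inner_coeff t < 0 \<longleftrightarrow> t^2 * inner_coeff t < 0"
    using assms by (simp_all add: zero_less_mult_iff mult_less_0_iff)
  then show "0 < inner_coeff t \<longleftrightarrow> scaled_mixed_force t < 4 / sqrt 8 ^ 3"
    and "inner_coeff t < 0 \<longleftrightarrow> 4 / sqrt 8 ^ 3 < scaled_mixed_force t"
    unfolding inner_coeff_scaled[OF assms] by simp_all
qed

lemma strict_mono_on_scaled_mixed_force: "strict_mono_on {0<..<1} scaled_mixed_force"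
proof (rule strict_mono_onI)
  fix s t :: real
  assume "s \<in> {0<..<1}" "t \<in> {0<..<1}" "s < t"
  then have st: "0 < s" "s < t" "t < 1" by auto
  have "s ^ 3 / (sqrt 3 ^ 3 * (1 - s)^2) < t ^ 3 / (sqrt 3 ^ 3 * (1 - t)^2)"
    using st by (intro frac_less power_strict_mono mult_left_mono power_mono) auto
  then have radial: "s ^ 3 * ((1 - s) / radial_dist s ^ 3) < t ^ 3 * ((1 - t) / radial_dist t ^ 3)"
    using st by (simp add: radial_term_eq)
  have cross_eq: "x ^ 3 * ((x + 3) / cross_dist x ^ 3) = (x + 3) * sqrt (x^2 / (3 * x^2 + 2 * x + 3)) ^ 3"
    if "0 < x" for x
    using that by (simp add: cross_dist_def real_sqrt_divide power_divide)
  have "s^2 * (3 * t^2 + 2 * t + 3) \<le> t^2 * (3 * s^2 + 2 * s + 3)"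
  proof -
    have "s * (s * t) \<le> t * (s * t)" "s^2 \<le> t^2"
      using st by (auto intro: mult_right_mono power_mono)
    then show ?thesis
      by (simp add: power2_eq_square algebra_simps)
  qed
  then have "s^2 / (3 * s^2 + 2 * s + 3) \<le> t^2 / (3 * t^2 + 2 * t + 3)"
    using st by (simp add: divide_simps add_pos_pos)
  then have "(s + 3) * sqrt (s^2 / (3 * s^2 + 2 * s + 3)) ^ 3
      \<le> (t + 3) * sqrt (t^2 / (3 * t^2 + 2 * t + 3)) ^ 3"
    using st by (intro mult_mono power_mono real_sqrt_le_mono) auto
  then have "s ^ 3 * ((s + 3) / cross_dist s ^ 3) \<le> t ^ 3 * ((t + 3) / cross_dist t ^ 3)"
    using cross_eq[of s] cross_eq[of t] st by simp
  with radial show "scaled_mixed_force s < scaled_mixed_force t"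
    by (simp add: scaled_mixed_force_def distrib_left)
qed

lemma scaled_mixed_force_half: "scaled_mixed_force (1/2) \<le> 4 / sqrt 8 ^ 3"
proof -
  have "17/10 \<le> sqrt 3" "2 \<le> sqrt (3 * (1/2)^2 + 2 * (1/2) + 3)"
    by (rule real_le_rsqrt, simp add: power2_eq_square)+
  moreover have "sqrt 8 \<le> 283/100"
    by (rule real_le_lsqrt) (simp_all add: power2_eq_square)
  ultimately have bounds: "1 / (sqrt 3 ^ 3 * (1 - 1/2)^2) \<le> 4 / (3 * (17/10))"
    "(1/2 + 3) / cross_dist (1/2) ^ 3 \<le> (7/2) / 2 ^ 3"
    "4 / (8 * (283/100)) \<le> 4 / sqrt 8 ^ 3"
    by (auto simp: cross_dist_def power3_eq_cube field_simps intro!: divide_left_mono power_mono)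
  have "scaled_mixed_force (1/2)
      = (1/2)^3 * (1 / (sqrt 3 ^ 3 * (1 - 1/2)^2) + (1/2 + 3) / cross_dist (1/2) ^ 3)"
    unfolding scaled_mixed_force_def by (subst radial_term_eq) auto
  also have "\<dots> \<le> (1/2)^3 * (4 / (3 * (17/10)) + (7/2) / 2 ^ 3)"
    using bounds(1,2) by (intro mult_left_mono add_mono) auto
  also have "\<dots> \<le> 4 / (8 * (283/100))"
    by (simp add: power3_eq_cube)
  also have "\<dots> \<le> 4 / sqrt 8 ^ 3"
    by (fact bounds(3))
  finally show ?thesis .
qed

lemma scaled_mixed_force_three_fifths: "4 / sqrt 8 ^ 3 < scaled_mixed_force (3/5)"
proof -
  have "28/10 \<le> sqrt 8"
    by (rule real_le_rsqrt) (simp add: power2_eq_square)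
  then have "4 / sqrt 8 ^ 3 \<le> 4 / (8 * (28/10))"
    by (simp add: power3_eq_cube field_simps)
  also have "\<dots> < (3/5)^3 * (1 / (3 * (7/4) * (1 - 3/5)^2))"
    by (simp add: power2_eq_square power3_eq_cube)
  also have "\<dots> \<le> (3/5)^3 * (1 / (sqrt 3 ^ 3 * (1 - 3/5)^2) + (3/5 + 3) / cross_dist (3/5) ^ 3)"
  proof -
    have "sqrt 3 \<le> 7/4"
      by (rule real_le_lsqrt) (simp_all add: power2_eq_square)
    then have "1 / (3 * (7/4) * (1 - 3/5)^2) \<le> 1 / (sqrt 3 ^ 3 * (1 - 3/5)^2)"
      by (simp add: power3_eq_cube field_simps)
    then show ?thesis
      by (intro mult_left_mono add_increasing2) (auto simp: cross_dist_def)
  qed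
  also have "\<dots> = scaled_mixed_force (3/5)"
    unfolding scaled_mixed_force_def by (subst radial_term_eq) auto
  finally show ?thesis .
qed

theorem theorem6:
  shows "\<exists>\<delta>::real. 0 < \<delta> \<and> \<delta> < 1 \<and>
    (\<forall>t \<mu>1 \<mu>2. 0 < t \<and> t < \<delta> \<and> \<mu>1 \<noteq> 0 \<and> \<mu>2 \<noteq> 0 \<and>
        central_config 8 (nested_tet t) (nested_mass \<mu>1 \<mu>2) \<longrightarrow> sgn \<mu>1 = sgn \<mu>2) \<and>
    (\<forall>t \<mu>1 \<mu>2. \<delta> < t \<and> t < 1 \<and> \<mu>1 \<noteq> 0 \<and> \<mu>2 \<noteq> 0 \<and>
        central_config 8 (nested_tet t) (nested_mass \<mu>1 \<mu>2) \<longrightarrow> sgn \<mu>1 = - sgn \<mu>2)"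
proof -
  obtain \<delta> where \<delta>: "1/2 \<le> \<delta>" "\<delta> \<le> 3/5"
    and below: "\<And>t. 0 < t \<Longrightarrow> t < \<delta> \<Longrightarrow> scaled_mixed_force t < 4 / sqrt 8 ^ 3"
    and above: "\<And>t. \<delta> < t \<Longrightarrow> t < 1 \<Longrightarrow> 4 / sqrt 8 ^ 3 < scaled_mixed_force t"
    using strict_mono_on_threshold[OF strict_mono_on_scaled_mixed_force _ _ _
        scaled_mixed_force_half scaled_mixed_force_three_fifths] by auto
  have balance: "\<mu>1 * outer_coeff t + \<mu>2 * inner_coeff t = 0" "outer_coeff t < 0"
    if "central_config 8 (nested_tet t) (nested_mass \<mu>1 \<mu>2)" "0 < t" "t < 1" for t \<mu>1 \<mu>2
    using that central_config_nested_tet_balance outer_coeff_neg by auto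
  show ?thesis
  proof (intro exI[of _ \<delta>] conjI allI impI; (elim conjE)?)
    show "0 < \<delta>" "\<delta> < 1"
      using \<delta> by auto
  next
    fix t \<mu>1 \<mu>2 :: real
    assume "0 < t" "t < \<delta>" "central_config 8 (nested_tet t) (nested_mass \<mu>1 \<mu>2)"
    moreover have "0 < inner_coeff t"
      using inner_coeff_sign(1) below \<open>0 < t\<close> \<open>t < \<delta>\<close> by blast
    ultimately show "sgn \<mu>1 = sgn \<mu>2"
      using balance[of t \<mu>1 \<mu>2] \<delta> mult_add_eq_0_sgn(1) by auto
  next
    fix t \<mu>1 \<mu>2 :: real
    assume "\<delta> < t" "t < 1" "central_config 8 (nested_tet t) (nested_mass \<mu>1 \<mu>2)"
    moreover have "inner_coeff t < 0"
      using inner_coeff_sign(2) above \<delta> \<open>\<delta> < t\<close> \<open>t < 1\<close> by fastforce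
    ultimately show "sgn \<mu>1 = - sgn \<mu>2"
      using balance[of t \<mu>1 \<mu>2] \<delta> mult_add_eq_0_sgn(2) by auto
  qed
qed

end
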